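(* Let $k\ge2$ be an even integer. For every constant $\epsilon>0$, no deterministic online algorithm is $(1-\frac{2}{k+2}+\epsilon)$-competitive for the maximum-cardinality online matching problem under edge arrivals with a hard budget of $k$ reassignments per arrival. That is, for every deterministic online algorithm for this problem and every constant $c\ge 0$, there is an instance on which the algorithm's final matching has cardinality strictly less than $(1-\frac{2}{k+2}+\epsilon)\cdot\mathsf{OPT}-c$, where $\mathsf{OPT}$ is the maximum cardinality of a matching in $G$.
   Context: Problem: $G=(V,E)$ is a graph, not necessarily bipartite. The algorithm initially knows $V$ and $k$. Over $|E|$ timesteps the edges of $G$ are revealed one at a time. At the end of each timestep the algorithm must output a matching in the graph revealed so far. The new matching $M_2$ must be obtainable from the previous matching $M_1$ (empty before the first timestep) by at most $k$ (re)assignments, the number of (re)assignments being the number of vertices of nonzero degree in $M_1\triangle M_2$; once a vertex is matched it must remain matched at all later timesteps. An algorithm is $\alpha$-competitive if there is a constant $c\ge0$ such that on every instance the cardinality of its final matching is at least $\alpha\cdot\mathsf{OPT}-c$. *)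

theory Defs
  imports Complex_Main
begin

definition is_edge :: "'v set \<Rightarrow> bool" where
  "is_edge e \<longleftrightarrow> card e = 2"

definition is_matching :: "'v set set \<Rightarrow> bool" where
  "is_matching M \<longleftrightarrow> (\<forall>e\<in>M. is_edge e) \<and>
     (\<forall>e1\<in>M. \<forall>e2\<in>M. e1 \<noteq> e2 \<longrightarrow> e1 \<inter> e2 = {})"

text \<open>An instance: a finite vertex set V and the list of edges of G in arrival
order (each edge of G revealed exactly once).\<close>

definition valid_instance :: "'v set \<Rightarrow> 'v set list \<Rightarrow> bool" where
  "valid_instance V es \<longleftrightarrow> finite V \<and> distinct es \<and>
     (\<forall>e\<in>set es. is_edge e \<and> e \<subseteq> V)"

definition reassignments :: "'v set set \<Rightarrow> 'v set set \<Rightarrow> nat" where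
  "reassignments M1 M2 = card (\<Union> ((M1 - M2) \<union> (M2 - M1)))"

text \<open>A deterministic online algorithm is a function mapping the known vertex
set V and the list of edges revealed so far to the matching output at the end
of the current timestep.\<close>

definition alg_output :: "('v set \<Rightarrow> 'v set list \<Rightarrow> 'v set set) \<Rightarrow> 'v set \<Rightarrow> 'v set list \<Rightarrow> 'v set set" where
  "alg_output alg V es = (if es = [] then {} else alg V es)"

definition feasible_algorithm :: "nat \<Rightarrow> ('v set \<Rightarrow> 'v set list \<Rightarrow> 'v set set) \<Rightarrow> bool" where
  "feasible_algorithm k alg \<longleftrightarrow>
     (\<forall>V es e. valid_instance V (es @ [e]) \<longrightarrow>
        (let M1 = alg_output alg V es; M2 = alg_output alg V (es @ [e]) in
          is_matching M2 \<and> M2 \<subseteq> set (es @ [e]) \<and>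
          reassignments M1 M2 \<le> k \<and> \<Union> M1 \<subseteq> \<Union> M2))"

definition OPT :: "'v set list \<Rightarrow> nat" where
  "OPT es = Max {card M | M. is_matching M \<and> M \<subseteq> set es}"

end

(* The adversary uses N disjoint paths with k + 2 vertices each and first reveals, on every
   path, the inner subpath through its k middle vertices. Whenever the algorithm's matching
   restricted to some path is the perfect matching of that inner subpath, the adversary reveals
   the two end edges of the path. A matching of path edges that covers all inner vertices of a
   path alternates along it, so it is either the inner perfect matching or the perfect matching
   of the whole path; since matched vertices stay matched, switching from the former to the
   latter would reassign all k + 2 vertices, which exceeds the budget. Hence such a path stays
   locked with k/2 edges while OPT gets k/2 + 1 there. When no further path can be locked, every
   unlocked path carries at most k/2 - 1 algorithm edges against k/2 in OPT, so the algorithm gets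
   at most a fraction (k/2)/(k/2 + 1) = 1 - 2/(k + 2) of OPT >= N, and N >= c/epsilon absorbs
   the additive constant. *)

theory Submission
  imports Defs
begin

lemma finite_edge: "is_edge e \<Longrightarrow> finite e"
  unfolding is_edge_def by (metis card.infinite zero_neq_numeral)

lemma finite_Union_matching:
  assumes "is_matching M" "finite M"
  shows "finite (\<Union>M)"
proof (rule finite_Union[OF assms(2)])
  show "finite e" if "e \<in> M" for e
    using that assms(1) finite_edge unfolding is_matching_def by blast
qed

lemma card_Union_matching:
  assumes "is_matching M" "finite M"
  shows "card (\<Union>M) = 2 * card M"
proof -
  have "card (\<Union>M) = sum card M"
  proof (rule card_Union_disjoint)
    show "pairwise disjnt M"
      using assms(1) unfolding is_matching_def pairwise_def disjnt_def by blast
  qed (use assms(1) finite_edge in \<open>auto simp: is_matching_def\<close>)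
  also have "\<dots> = sum (\<lambda>_. 2) M"
    using assms(1) unfolding is_matching_def is_edge_def by simp
  finally show ?thesis by simp
qed

lemma is_matching_subset: "is_matching M \<Longrightarrow> M' \<subseteq> M \<Longrightarrow> is_matching M'"
  unfolding is_matching_def by blast

lemma card_le_OPT:
  assumes "is_matching M" "M \<subseteq> set es"
  shows "card M \<le> OPT es"
proof -
  have "finite {card M | M. is_matching M \<and> M \<subseteq> set es}"
    by (rule finite_subset[of _ "card ` Pow (set es)"]) auto
  then show ?thesis unfolding OPT_def by (rule Max_ge) (use assms in blast)
qed

lemma valid_instance_prefix: "valid_instance V (es @ es') \<Longrightarrow> valid_instance V es"
  unfolding valid_instance_def by auto

lemma feasible_algorithmD:
  assumes "feasible_algorithm k alg" "valid_instance V (es @ [e])"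
  defines "M1 \<equiv> alg_output alg V es" and "M2 \<equiv> alg_output alg V (es @ [e])"
  shows "is_matching M2" "M2 \<subseteq> set (es @ [e])" "reassignments M1 M2 \<le> k" "\<Union>M1 \<subseteq> \<Union>M2"
  using assms unfolding feasible_algorithm_def Let_def by blast+

lemma alg_output_matching:
  assumes "feasible_algorithm k alg" "valid_instance V es"
  shows "is_matching (alg_output alg V es)" "alg_output alg V es \<subseteq> set es"
proof -
  have "is_matching (alg_output alg V es) \<and> alg_output alg V es \<subseteq> set es"
  proof (cases es rule: rev_cases)
    case Nil
    then show ?thesis unfolding alg_output_def is_matching_def by simp
  next
    case (snoc ys y)
    then show ?thesis using feasible_algorithmD[OF assms(1)] assms(2) by simp
  qed
  then show "is_matching (alg_output alg V es)" "alg_output alg V es \<subseteq> set es" by blast+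
qed

lemma ratio_sum_bound:
  fixes h :: nat
  assumes "1 \<le> h"
  shows "real (\<Sum>i\<in>I. if P i then h else h - 1)
           \<le> real h / (real h + 1) * real (\<Sum>i\<in>I. if P i then h + 1 else h)"
proof -
  have "real (if P i then h else h - 1) \<le> real h / (real h + 1) * real (if P i then h + 1 else h)"
    for i
  proof -
    have "real (h - 1) * (real h + 1) \<le> real h * real h"
      using assms by (simp add: of_nat_diff algebra_simps)
    then show ?thesis by (simp add: field_simps)
  qed
  then show ?thesis unfolding of_nat_sum sum_distrib_left by (rule sum_mono)
qed

locale path_gadgets =
  fixes k :: nat
  assumes even_k: "even k" and two_le_k: "2 \<le> k"
begin

text \<open>Its inner subpath consists of the inner_edges; the
  perfect matching of the inner subpath is parity_edges i False, that of the whole path is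
  parity_edges i True.\<close>

definition path_vertex :: "nat \<Rightarrow> nat \<Rightarrow> nat" where "path_vertex i j = i * (k + 2) + j"

definition path_edge :: "nat \<Rightarrow> nat \<Rightarrow> nat set" where
  "path_edge i j = {path_vertex i j, path_vertex i (Suc j)}"

definition path_edges :: "nat \<Rightarrow> nat set set" where "path_edges i = path_edge i ` {..k}"

definition inner_edges :: "nat \<Rightarrow> nat set set" where "inner_edges i = path_edge i ` {1..<k}"

definition parity_edges :: "nat \<Rightarrow> bool \<Rightarrow> nat set set" where
  "parity_edges i b = path_edge i ` {j. j \<le> k \<and> even j = b}"

lemma path_vertex_eq_iff:
  assumes "j < k + 2" "j' < k + 2"
  shows "path_vertex i j = path_vertex i' j' \<longleftrightarrow> i = i' \<and> j = j'"
proof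
  have div_mod: "(a * m + b) div m = a \<and> (a * m + b) mod m = b" if "b < m" for a b m :: nat
    using that by simp
  assume "path_vertex i j = path_vertex i' j'"
  then show "i = i' \<and> j = j'"
    using div_mod[OF assms(1), of i] div_mod[OF assms(2), of i'] unfolding path_vertex_def by metis
qed simp

lemma inj_path_vertex: "inj (path_vertex i)"
  by (rule injI) (simp add: path_vertex_def)

lemma is_edge_path_edge: "is_edge (path_edge i j)"
  unfolding is_edge_def path_edge_def path_vertex_def by simp

lemma path_edge_overlap:
  assumes "a \<le> k" "b \<le> k" "path_edge i a \<inter> path_edge i' b \<noteq> {}"
  shows "i = i' \<and> (a = b \<or> a = Suc b \<or> b = Suc a)"
  using assms unfolding path_edge_def by (auto simp: path_vertex_eq_iff)

lemma path_edge_eq_iff: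
  assumes "a \<le> k" "b \<le> k"
  shows "path_edge i a = path_edge i' b \<longleftrightarrow> i = i' \<and> a = b"
proof
  assume eq: "path_edge i a = path_edge i' b"
  then have "path_vertex i a \<in> path_edge i' b" "path_vertex i' b \<in> path_edge i a" unfolding path_edge_def by auto
  then show "i = i' \<and> a = b" using assms unfolding path_edge_def by (auto simp: path_vertex_eq_iff)
qed simp

lemma Union_path_edge_image: "\<Union>(path_edge i ` J) = path_vertex i ` (J \<union> Suc ` J)"
  unfolding path_edge_def by auto

lemma path_edges_disjoint: "i \<noteq> i' \<Longrightarrow> path_edges i \<inter> path_edges i' = {}"
  unfolding path_edges_def by (auto simp: path_edge_eq_iff)

lemma UN_path_edges_Int:
  assumes "\<And>i'. i' \<in> I \<Longrightarrow> X i' \<subseteq> path_edges i'"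
  shows "(\<Union>i'\<in>I. X i') \<inter> path_edges i = (if i \<in> I then X i else {})"
proof -
  have "X i' \<inter> path_edges i = {}" if "i' \<in> I" "i' \<noteq> i" for i'
    using assms[OF that(1)] path_edges_disjoint[OF that(2)] by blast
  then show ?thesis using assms by auto
qed

lemma path_edges_eq_inner_ends: "path_edges i = inner_edges i \<union> {path_edge i 0, path_edge i k}"
proof -
  have "{..k} = {1..<k} \<union> {0, k}" by auto
  then show ?thesis unfolding path_edges_def inner_edges_def by simp
qed

lemma end_edges_not_inner: "path_edge i 0 \<notin> inner_edges i" "path_edge i k \<notin> inner_edges i"
  unfolding inner_edges_def by (auto simp: path_edge_eq_iff)

lemma parity_edges_subset: "parity_edges i b \<subseteq> path_edges i"
  unfolding parity_edges_def path_edges_def by auto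

lemma inner_edges_subset: "inner_edges i \<subseteq> path_edges i"
  unfolding inner_edges_def path_edges_def by auto

lemma odd_index_bounds: "odd j \<Longrightarrow> j \<le> k \<Longrightarrow> 1 \<le> j \<and> j < k"
  using even_k by (cases j; cases "j = k") auto

lemma odd_edges_subset_inner: "parity_edges i False \<subseteq> inner_edges i"
  unfolding parity_edges_def inner_edges_def by (auto dest: odd_index_bounds)

lemma Union_parity_edges:
  "\<Union>(parity_edges i b) = path_vertex i ` (if b then {..k + 1} else {1..k})"
proof -
  have "{j. j \<le> k \<and> even j = b} \<union> Suc ` {j. j \<le> k \<and> even j = b}
          = (if b then {..k + 1} else {1..k})"
  proof (rule set_eqI)
    fix j
    show "j \<in> {j. j \<le> k \<and> even j = b} \<union> Suc ` {j. j \<le> k \<and> even j = b}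
            \<longleftrightarrow> j \<in> (if b then {..k + 1} else {1..k})"
      using even_k by (cases j) (auto simp: image_iff dest: odd_index_bounds)
  qed
  then show ?thesis unfolding parity_edges_def Union_path_edge_image by simp
qed

lemma Union_inner_edges: "\<Union>(inner_edges i) \<subseteq> path_vertex i ` {1..k}"
  unfolding inner_edges_def Union_path_edge_image by auto

lemma card_parity_edges: "card (parity_edges i b) = (if b then k div 2 + 1 else k div 2)"
proof -
  have "inj_on (path_edge i) {j. j \<le> k \<and> even j = b}"
    by (rule inj_onI) (simp add: path_edge_eq_iff)
  then have "card (parity_edges i b) = card {j. j \<le> k \<and> even j = b}"
    unfolding parity_edges_def by (rule card_image)
  also have "{j. j \<le> k \<and> even j = b}
               = (\<lambda>m. 2 * m + (if b then 0 else 1)) ` (if b then {..k div 2} else {..<k div 2})"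
  proof (cases b)
    case True
    then show ?thesis using even_k by (auto simp: image_iff elim!: evenE)
  next
    case False
    then show ?thesis using even_k by (auto simp: image_iff elim!: evenE oddE) presburger
  qed
  also have "card \<dots> = (if b then k div 2 + 1 else k div 2)"
    by (subst card_image) (auto intro: inj_onI)
  finally show ?thesis .
qed

lemma covered_vertex_path_edge:
  assumes "M \<subseteq> (\<Union>i'. path_edges i')" "path_vertex i j \<in> \<Union>M" "1 \<le> j" "j \<le> k"
  shows "path_edge i (j - 1) \<in> M \<or> path_edge i j \<in> M"
proof -
  obtain i' b where b: "path_edge i' b \<in> M" "path_vertex i j \<in> path_edge i' b" "b \<le> k"
    using assms(1,2) unfolding path_edges_def by blast
  then have "path_vertex i j = path_vertex i' b \<or> path_vertex i j = path_vertex i' (Suc b)" unfolding path_edge_def by simp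
  then have "i' = i \<and> (b = j \<or> Suc b = j)" using b(3) assms(4) by (auto simp: path_vertex_eq_iff)
  then show ?thesis using b(1) by auto
qed

lemma matching_not_consecutive_path_edges:
  assumes "is_matching M" "path_edge i j \<in> M" "Suc j \<le> k"
  shows "path_edge i (Suc j) \<notin> M"
proof
  assume "path_edge i (Suc j) \<in> M"
  moreover have "path_edge i j \<noteq> path_edge i (Suc j)" using assms(3) by (simp add: path_edge_eq_iff)
  moreover have "path_vertex i (Suc j) \<in> path_edge i j \<inter> path_edge i (Suc j)" unfolding path_edge_def by simp
  ultimately show False using assms(1,2) unfolding is_matching_def by blast
qed

lemma covered_path_alternates:
  assumes "is_matching M" "M \<subseteq> (\<Union>i'. path_edges i')" "path_vertex i ` {1..k} \<subseteq> \<Union>M" "j \<le> k"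
  shows "path_edge i j \<in> M \<longleftrightarrow> (even j \<longleftrightarrow> path_edge i 0 \<in> M)"
  using assms(4)
proof (induction j)
  case (Suc j)
  have "path_vertex i (Suc j) \<in> path_vertex i ` {1..k}" using Suc.prems by simp
  then have "path_vertex i (Suc j) \<in> \<Union>M" using assms(3) by blast
  then have "path_edge i j \<in> M \<or> path_edge i (Suc j) \<in> M"
    using covered_vertex_path_edge[OF assms(2)] Suc.prems by fastforce
  moreover have "\<not> (path_edge i j \<in> M \<and> path_edge i (Suc j) \<in> M)"
    using matching_not_consecutive_path_edges[OF assms(1)] Suc.prems by blast
  ultimately show ?case using Suc by auto
qed simp

lemma covered_path_edges:
  assumes "is_matching M" "M \<subseteq> (\<Union>i'. path_edges i')" "path_vertex i ` {1..k} \<subseteq> \<Union>M"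
  shows "M \<inter> path_edges i = parity_edges i (path_edge i 0 \<in> M)"
proof -
  have "M \<inter> path_edges i = path_edge i ` {j. j \<le> k \<and> path_edge i j \<in> M}"
    unfolding path_edges_def by auto
  also have "{j. j \<le> k \<and> path_edge i j \<in> M} = {j. j \<le> k \<and> even j = (path_edge i 0 \<in> M)}"
    using covered_path_alternates[OF assms] by blast
  finally show ?thesis unfolding parity_edges_def .
qed

lemma locked_path_stays_locked:
  assumes "is_matching M1" "is_matching M2" "finite M1" "finite M2"
    and M2_paths: "M2 \<subseteq> (\<Union>i'. path_edges i')"
    and locked: "M1 \<inter> path_edges i = parity_edges i False"
    and keeps_matched: "\<Union>M1 \<subseteq> \<Union>M2" and budget: "reassignments M1 M2 \<le> k"
  shows "M2 \<inter> path_edges i = parity_edges i False"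
proof -
  have "path_vertex i ` {1..k} = \<Union>(M1 \<inter> path_edges i)"
    using locked Union_parity_edges[of i False] by simp
  also have "\<dots> \<subseteq> \<Union>M2" using keeps_matched by blast
  finally have "path_vertex i ` {1..k} \<subseteq> \<Union>M2" .
  note M2_edges = covered_path_edges[OF assms(2) M2_paths this]
  have "path_edge i 0 \<notin> M2"
  proof
    assume "path_edge i 0 \<in> M2"
    txt \<open>Then every vertex of the path changes its partner.\<close>
    then have "M2 \<inter> path_edges i = parity_edges i True" using M2_edges by simp
    moreover have "parity_edges i True \<inter> parity_edges i False = {}"
      unfolding parity_edges_def by (auto simp: path_edge_eq_iff)
    ultimately have "parity_edges i True \<subseteq> M2 - M1"
      using locked parity_edges_subset by blast
    then have "\<Union>(parity_edges i True) \<subseteq> \<Union>((M1 - M2) \<union> (M2 - M1))" by blast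
    then have "path_vertex i ` {..k + 1} \<subseteq> \<Union>((M1 - M2) \<union> (M2 - M1))"
      using Union_parity_edges[of i True] by simp
    moreover have "finite (\<Union>((M1 - M2) \<union> (M2 - M1)))"
    proof (rule finite_subset)
      show "\<Union>((M1 - M2) \<union> (M2 - M1)) \<subseteq> \<Union>M1 \<union> \<Union>M2" by blast
      show "finite (\<Union>M1 \<union> \<Union>M2)" using assms(1-4) by (simp add: finite_Union_matching)
    qed
    ultimately have "card (path_vertex i ` {..k + 1}) \<le> reassignments M1 M2"
      unfolding reassignments_def by (rule card_mono[rotated])
    moreover have "card (path_vertex i ` {..k + 1}) = k + 2"
      by (simp add: card_image inj_on_subset[OF inj_path_vertex])
    ultimately show False using budget by simp
  qed
  then show ?thesis using M2_edges by simp
qed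

lemma unlocked_path_card:
  assumes "is_matching M" "finite M" "M \<subseteq> (\<Union>i'. path_edges i')"
    and inner: "M \<inter> path_edges i \<subseteq> inner_edges i"
    and unlocked: "M \<inter> path_edges i \<noteq> parity_edges i False"
  shows "card (M \<inter> path_edges i) < k div 2"
proof (rule ccontr)
  let ?Q = "M \<inter> path_edges i"
  assume "\<not> card ?Q < k div 2"
  moreover have "is_matching ?Q" using assms(1) by (rule is_matching_subset) blast
  then have "card (\<Union>?Q) = 2 * card ?Q" using assms(2) by (simp add: card_Union_matching)
  ultimately have "k \<le> card (\<Union>?Q)" using even_k by auto
  moreover have "card (path_vertex i ` {1..k}) = k" by (simp add: card_image inj_on_subset[OF inj_path_vertex])
  moreover have "\<Union>?Q \<subseteq> path_vertex i ` {1..k}" using inner Union_inner_edges by blast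
  ultimately have "\<Union>?Q = path_vertex i ` {1..k}" by (intro card_seteq) simp_all
  then have "path_vertex i ` {1..k} \<subseteq> \<Union>M" by blast
  note M_edges = covered_path_edges[OF assms(1,3) this]
  have "path_edge i 0 \<notin> M"
    using inner end_edges_not_inner unfolding path_edges_def by auto
  with M_edges unlocked show False by simp
qed

lemma card_eq_sum_path_edges:
  assumes "finite M" "M \<subseteq> (\<Union>i<n. path_edges i)"
  shows "card M = (\<Sum>i<n. card (M \<inter> path_edges i))"
proof -
  have "M = (\<Union>i<n. M \<inter> path_edges i)" using assms(2) by blast
  also have "card \<dots> = (\<Sum>i<n. card (M \<inter> path_edges i))"
    using assms(1) path_edges_disjoint by (intro card_UN_disjoint) auto
  finally show ?thesis .
qed

lemma is_matching_parity_edges_Union: "is_matching (\<Union>i\<in>I. parity_edges i (P i))"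
  unfolding is_matching_def
proof (intro conjI ballI impI)
  fix f assume "f \<in> (\<Union>i\<in>I. parity_edges i (P i))"
  then show "is_edge f" unfolding parity_edges_def using is_edge_path_edge by blast
next
  fix f f' assume "f \<in> (\<Union>i\<in>I. parity_edges i (P i))" "f' \<in> (\<Union>i\<in>I. parity_edges i (P i))"
    and "f \<noteq> f'"
  then obtain i a i' b where f: "f = path_edge i a" "f' = path_edge i' b"
    and bounds: "a \<le> k" "b \<le> k" and parities: "even a = P i" "even b = P i'"
    unfolding parity_edges_def by blast
  show "f \<inter> f' = {}"
  proof (rule ccontr)
    assume "f \<inter> f' \<noteq> {}"
    then have "i = i' \<and> (a = b \<or> a = Suc b \<or> b = Suc a)"
      using path_edge_overlap[OF bounds] unfolding f by blast
    then show False using parities \<open>f \<noteq> f'\<close> unfolding f by auto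
  qed
qed

end

locale adversary = path_gadgets k for k +
  fixes alg :: "nat set \<Rightarrow> nat set list \<Rightarrow> nat set set" and N :: nat
  assumes feasible: "feasible_algorithm k alg"
begin

definition vertices :: "nat set" where "vertices = {..<N * (k + 2)}"

definition matching_after :: "nat set list \<Rightarrow> nat set set" where
  "matching_after es = alg_output alg vertices es"

text \<open>S is the set of locked paths, whose end edges have already been revealed.\<close>

definition revealed :: "nat set \<Rightarrow> nat set set" where
  "revealed S = (\<Union>i<N. if i \<in> S then path_edges i else inner_edges i)"

definition adversary_invariant :: "nat set list \<Rightarrow> nat set \<Rightarrow> bool" where
  "adversary_invariant es S \<longleftrightarrow> S \<subseteq> {..<N} \<and> valid_instance vertices es \<and> set es = revealed S \<and>
     (\<forall>i\<in>S. matching_after es \<inter> path_edges i = parity_edges i False)"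

definition initial_edges :: "nat set list" where
  "initial_edges = map (\<lambda>(i, j). path_edge i j) (List.product [0..<N] [1..<k])"

lemma path_edge_subset_vertices:
  assumes "i < N" "j \<le> k"
  shows "path_edge i j \<subseteq> vertices"
proof -
  have "path_vertex i (Suc j) < N * (k + 2)"
  proof -
    have "path_vertex i (Suc j) < (i + 1) * (k + 2)" using assms(2) unfolding path_vertex_def by simp
    also have "\<dots> \<le> N * (k + 2)" using assms(1) by (intro mult_right_mono) auto
    finally show ?thesis .
  qed
  then show ?thesis unfolding path_edge_def vertices_def path_vertex_def by auto
qed

lemma revealed_path_edges:
  assumes "i < N"
  shows "revealed S \<inter> path_edges i = (if i \<in> S then path_edges i else inner_edges i)"
  unfolding revealed_def using assms inner_edges_subset by (subst UN_path_edges_Int) auto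

lemma revealed_subset_path_edges: "revealed S \<subseteq> (\<Union>i<N. path_edges i)"
  unfolding revealed_def using inner_edges_subset by auto

lemma revealed_insert:
  assumes "i < N"
  shows "revealed (insert i S) = revealed S \<union> {path_edge i 0, path_edge i k}"
  unfolding revealed_def using assms path_edges_eq_inner_ends by auto

lemma matching_after_locked_step:
  assumes "valid_instance vertices (es @ [e])" "set (es @ [e]) \<subseteq> (\<Union>i'. path_edges i')"
    and "matching_after es \<inter> path_edges i = parity_edges i False"
  shows "matching_after (es @ [e]) \<inter> path_edges i = parity_edges i False"
proof (rule locked_path_stays_locked)
  note prefix = valid_instance_prefix[OF assms(1)]
  show "is_matching (matching_after es)" "is_matching (matching_after (es @ [e]))"
    using alg_output_matching[OF feasible] prefix assms(1) unfolding matching_after_def by blast+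
  show "finite (matching_after es)" "finite (matching_after (es @ [e]))"
    using alg_output_matching(2)[OF feasible] prefix assms(1) unfolding matching_after_def
    by (meson finite_set finite_subset)+
  show "matching_after (es @ [e]) \<subseteq> (\<Union>i'. path_edges i')"
    using alg_output_matching(2)[OF feasible assms(1)] assms(2) unfolding matching_after_def by blast
  show "\<Union>(matching_after es) \<subseteq> \<Union>(matching_after (es @ [e]))"
    "reassignments (matching_after es) (matching_after (es @ [e])) \<le> k"
    using feasible_algorithmD[OF feasible assms(1)] unfolding matching_after_def by blast+
qed (use assms(3) in blast)

lemma adversary_invariant_initial: "adversary_invariant initial_edges {}"
proof -
  have "inj_on (\<lambda>(i, j). path_edge i j) ({0..<N} \<times> {1..<k})"
    by (rule inj_onI) (auto simp: path_edge_eq_iff)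
  then have "distinct initial_edges"
    unfolding initial_edges_def by (simp add: distinct_map distinct_product)
  moreover have "set initial_edges = revealed {}"
    unfolding initial_edges_def revealed_def inner_edges_def by auto
  moreover have "is_edge e \<and> e \<subseteq> vertices" if e_initial: "e \<in> set initial_edges" for e
  proof -
    obtain i j where "e = path_edge i j" "i < N" "j < k"
      using e_initial unfolding initial_edges_def by auto
    then show ?thesis using is_edge_path_edge path_edge_subset_vertices by simp
  qed
  ultimately show ?thesis
    unfolding adversary_invariant_def valid_instance_def vertices_def by simp
qed

lemma adversary_invariant_step:
  assumes inv: "adversary_invariant es S" and i: "i < N" "i \<notin> S"
    and locked: "matching_after es \<inter> path_edges i = parity_edges i False"
  shows "adversary_invariant (es @ [path_edge i 0, path_edge i k]) (insert i S)"
proof -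
  let ?es1 = "es @ [path_edge i 0]" and ?es2 = "es @ [path_edge i 0, path_edge i k]"
  from inv have S: "S \<subseteq> {..<N}" and valid: "valid_instance vertices es"
    and revealed_es: "set es = revealed S"
    and locked_S: "\<forall>j\<in>S. matching_after es \<inter> path_edges j = parity_edges j False"
    unfolding adversary_invariant_def by auto
  have "set es \<inter> path_edges i = inner_edges i"
    using revealed_path_edges[OF i(1)] i(2) revealed_es by simp
  then have fresh: "path_edge i 0 \<notin> set es" "path_edge i k \<notin> set es"
    using end_edges_not_inner[of i] path_edges_eq_inner_ends[of i] by blast+
  have "path_edge i 0 \<noteq> path_edge i k" using two_le_k by (simp add: path_edge_eq_iff)
  with valid fresh have valid2: "valid_instance vertices ?es2"
    unfolding valid_instance_def using is_edge_path_edge path_edge_subset_vertices[OF i(1)] by simp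
  then have valid1: "valid_instance vertices ?es1"
    using valid_instance_prefix[of vertices ?es1 "[path_edge i k]"] by simp
  have revealed_es2: "set ?es2 = revealed (insert i S)"
    using revealed_es revealed_insert[OF i(1)] by auto
  then have "set ?es2 \<subseteq> (\<Union>i'<N. path_edges i')"
    using revealed_subset_path_edges by simp
  then have paths2: "set (?es1 @ [path_edge i k]) \<subseteq> (\<Union>i'. path_edges i')" by auto
  then have paths1: "set ?es1 \<subseteq> (\<Union>i'. path_edges i')" by auto
  have "matching_after ?es2 \<inter> path_edges j = parity_edges j False" if "j \<in> insert i S" for j
  proof -
    have "matching_after es \<inter> path_edges j = parity_edges j False"
      using that locked locked_S by auto
    then have "matching_after ?es1 \<inter> path_edges j = parity_edges j False"
      by (rule matching_after_locked_step[OF valid1 paths1])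
    then show ?thesis
      using matching_after_locked_step[of ?es1 "path_edge i k"] valid2 paths2 by simp
  qed
  then show ?thesis
    unfolding adversary_invariant_def using S i(1) valid2 revealed_es2 by blast
qed

lemma adversary_terminates:
  assumes "adversary_invariant es S"
  shows "\<exists>es' S'. adversary_invariant es' S' \<and>
           (\<forall>i<N. i \<notin> S' \<longrightarrow> matching_after es' \<inter> path_edges i \<noteq> parity_edges i False)"
  using assms
proof (induction "N - card S" arbitrary: es S rule: less_induct)
  case less
  show ?case
  proof (cases "\<exists>i<N. i \<notin> S \<and> matching_after es \<inter> path_edges i = parity_edges i False")
    case False
    then show ?thesis using less.prems by blast
  next
    case True
    then obtain i where i: "i < N" "i \<notin> S"
      and locked: "matching_after es \<inter> path_edges i = parity_edges i False" by blast
    have "S \<subseteq> {..<N}" using less.prems unfolding adversary_invariant_def by simp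
    then have "finite S" "insert i S \<subseteq> {..<N}" using i(1) finite_subset by auto
    then have "N - card (insert i S) < N - card S"
      using i(2) card_mono[of "{..<N}" "insert i S"] by simp
    then show ?thesis
      using less.hyps adversary_invariant_step[OF less.prems i locked] by blast
  qed
qed

lemma card_matching_after_le:
  assumes inv: "adversary_invariant es S"
    and unlocked: "\<forall>i<N. i \<notin> S \<longrightarrow> matching_after es \<inter> path_edges i \<noteq> parity_edges i False"
  shows "card (matching_after es) \<le> (\<Sum>i<N. if i \<in> S then k div 2 else k div 2 - 1)"
proof -
  let ?M = "matching_after es"
  from inv have valid: "valid_instance vertices es" and revealed_es: "set es = revealed S"
    and locked: "\<forall>i\<in>S. ?M \<inter> path_edges i = parity_edges i False"
    unfolding adversary_invariant_def by auto
  have M: "is_matching ?M" "?M \<subseteq> revealed S"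
    using alg_output_matching[OF feasible valid] revealed_es unfolding matching_after_def by auto
  then have finite_M: "finite ?M" using finite_subset[OF _ finite_set] revealed_es by metis
  have M_paths: "?M \<subseteq> (\<Union>i<N. path_edges i)" using M(2) revealed_subset_path_edges by blast
  have "card ?M = (\<Sum>i<N. card (?M \<inter> path_edges i))"
    by (rule card_eq_sum_path_edges[OF finite_M M_paths])
  also have "\<dots> \<le> (\<Sum>i<N. if i \<in> S then k div 2 else k div 2 - 1)"
  proof (rule sum_mono)
    fix i assume "i \<in> {..<N}"
    show "card (?M \<inter> path_edges i) \<le> (if i \<in> S then k div 2 else k div 2 - 1)"
    proof (cases "i \<in> S")
      case True
      then show ?thesis using locked by (simp add: card_parity_edges)
    next
      case False
      have "revealed S \<inter> path_edges i = inner_edges i"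
        using revealed_path_edges \<open>i \<in> {..<N}\<close> False by simp
      then have inner: "?M \<inter> path_edges i \<subseteq> inner_edges i" using M(2) by blast
      have "?M \<inter> path_edges i \<noteq> parity_edges i False"
        using unlocked \<open>i \<in> {..<N}\<close> False by simp
      then have "card (?M \<inter> path_edges i) < k div 2"
        using unlocked_path_card[OF M(1) finite_M _ inner] M_paths by blast
      then show ?thesis using False by simp
    qed
  qed
  finally show ?thesis .
qed

lemma OPT_lower_bound:
  assumes inv: "adversary_invariant es S"
  shows "(\<Sum>i<N. if i \<in> S then k div 2 + 1 else k div 2) \<le> OPT es"
proof -
  let ?W = "\<Union>i<N. parity_edges i (i \<in> S)"
  have "parity_edges i (i \<in> S) \<subseteq> (if i \<in> S then path_edges i else inner_edges i)" for i
    using parity_edges_subset odd_edges_subset_inner by simp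
  then have "?W \<subseteq> revealed S" unfolding revealed_def by (intro UN_mono) simp_all
  then have "?W \<subseteq> set es" using inv unfolding adversary_invariant_def by simp
  then have "card ?W \<le> OPT es" by (rule card_le_OPT[OF is_matching_parity_edges_Union])
  moreover have "?W \<subseteq> (\<Union>i<N. path_edges i)" by (intro UN_mono) (simp_all add: parity_edges_subset)
  then have "card ?W = (\<Sum>i<N. card (?W \<inter> path_edges i))"
    by (intro card_eq_sum_path_edges) (simp_all add: parity_edges_def)
  moreover have "?W \<inter> path_edges i = parity_edges i (i \<in> S)" if "i < N" for i
    using that UN_path_edges_Int[of "{..<N}" "\<lambda>i. parity_edges i (i \<in> S)"] parity_edges_subset
    by simp
  ultimately show ?thesis by (simp add: card_parity_edges)
qed

lemma adversary_outcome:
  "\<exists>es. valid_instance vertices es \<and>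
     real (card (matching_after es)) \<le> (1 - 2 / (real k + 2)) * real (OPT es) \<and>
     real N \<le> real (OPT es)"
proof -
  obtain es S where inv: "adversary_invariant es S"
    and unlocked: "\<forall>i<N. i \<notin> S \<longrightarrow> matching_after es \<inter> path_edges i \<noteq> parity_edges i False"
    using adversary_terminates[OF adversary_invariant_initial] by blast
  define h where "h = k div 2"
  have h: "1 \<le> h" "1 - 2 / (real k + 2) = real h / (real h + 1)"
    using even_k two_le_k unfolding h_def by (auto elim!: evenE simp: field_simps)
  let ?opt_sum = "\<Sum>i<N. if i \<in> S then h + 1 else h"
  have "real (card (matching_after es)) \<le> real (\<Sum>i<N. if i \<in> S then h else h - 1)"
    using card_matching_after_le[OF inv unlocked] unfolding h_def by linarith
  also have "\<dots> \<le> real h / (real h + 1) * real ?opt_sum" by (rule ratio_sum_bound[OF h(1)])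
  also have "\<dots> \<le> real h / (real h + 1) * real (OPT es)"
    using OPT_lower_bound[OF inv] unfolding h_def by (intro mult_left_mono of_nat_mono) simp_all
  finally have "real (card (matching_after es)) \<le> (1 - 2 / (real k + 2)) * real (OPT es)"
    unfolding h(2) .
  moreover have "N \<le> ?opt_sum" using h(1) sum_mono[of "{..<N}" "\<lambda>_. 1::nat"] by fastforce
  then have "N \<le> OPT es" using OPT_lower_bound[OF inv] unfolding h_def by linarith
  ultimately show ?thesis using inv unfolding adversary_invariant_def by auto
qed

end

theorem theorem6:
  fixes k :: nat and \<epsilon> :: real
  assumes "even k" and "k \<ge> 2" and "\<epsilon> > 0"
  shows "\<forall>alg :: nat set \<Rightarrow> nat set list \<Rightarrow> nat set set.
           feasible_algorithm k alg \<longrightarrow>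
           (\<forall>c::real. c \<ge> 0 \<longrightarrow>
              (\<exists>V es. valid_instance V es \<and>
                 real (card (alg_output alg V es))
                   < (1 - 2 / (real k + 2) + \<epsilon>) * real (OPT es) - c))"
proof (intro allI impI)
  fix alg :: "nat set \<Rightarrow> nat set list \<Rightarrow> nat set set" and c :: real
  assume "feasible_algorithm k alg" "c \<ge> 0"
  define N where "N = nat \<lceil>c / \<epsilon>\<rceil> + 1"
  interpret adversary k alg N
    by unfold_locales (use assms \<open>feasible_algorithm k alg\<close> in auto)
  obtain es where valid: "valid_instance vertices es"
    and ratio: "real (card (matching_after es)) \<le> (1 - 2 / (real k + 2)) * real (OPT es)"
    and N_le: "real N \<le> real (OPT es)"
    using adversary_outcome by blast
  have "c / \<epsilon> < real N" unfolding N_def by linarith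
  then have "c < \<epsilon> * real N" using assms(3) by (simp add: field_simps)
  also have "\<dots> \<le> \<epsilon> * real (OPT es)" using N_le assms(3) by simp
  finally have "real (card (matching_after es)) < (1 - 2 / (real k + 2) + \<epsilon>) * real (OPT es) - c"
    using ratio by (simp add: algebra_simps)
  then show "\<exists>V es. valid_instance V es \<and>
               real (card (alg_output alg V es)) < (1 - 2 / (real k + 2) + \<epsilon>) * real (OPT es) - c"
    using valid unfolding matching_after_def by blast
qed

end
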